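(* Let $p>1$, $q=\frac{p}{p-1}$ and $0<a<b$. Then $$|A(a,b)-L(a,b)|\le \frac{\log b-\log a}{2(p+1)^{1/p}}\,\bigl(A(|a|^q,|b|^q)\bigr)^{1/q}.$$
   Context: For positive $x,y$: the arithmetic mean is $A(x,y)=\frac{x+y}{2}$; the logarithmic mean is $L(x,y)=x$ if $x=y$ and $L(x,y)=\frac{y-x}{\log y-\log x}$ if $x\ne y$. *)

theory Defs
  imports Complex_Main
begin

definition amean :: "real \<Rightarrow> real \<Rightarrow> real" where
  "amean x y = (x + y) / 2"

definition lmean :: "real \<Rightarrow> real \<Rightarrow> real" where
  "lmean x y = (if x = y then x else (y - x) / (ln y - ln x))"

end

theory Submission
  imports Defs "HOL-Analysis.Analysis"
begin

text \<open>Put \<open>t = ln b - ln a\<close>, so that \<open>b = a e\<^sup>t\<close>. Then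
  \<open>A(a,b) - L(a,b) = (a/t) E(t)\<close>, where \<open>E(t) = t(1 + e\<^sup>t)/2 - (e\<^sup>t - 1)\<close> is the error of the
  trapezoidal rule for \<open>\<integral>\<^sub>0\<^sup>t e\<^sup>x dx\<close>; elementary calculus gives \<open>0 \<le> E(t) \<le> t\<^sup>2(1 + e\<^sup>t)/8\<close>,
  hence \<open>0 \<le> A - L \<le> t A(a,b)/4\<close>. The claim follows since \<open>(p + 1)\<^sup>1\<^sup>/\<^sup>p \<le> 2\<close> and, by convexity
  of \<open>x\<^sup>q\<close>, \<open>A(a,b) \<le> A(a\<^sup>q,b\<^sup>q)\<^sup>1\<^sup>/\<^sup>q\<close>.\<close>

lemma nonneg_if_DERIV_nonneg:
  fixes f f' :: "real \<Rightarrow> real"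
  assumes "f 0 = 0"
    and "\<And>x. 0 \<le> x \<Longrightarrow> (f has_real_derivative f' x) (at x)"
    and "\<And>x. 0 \<le> x \<Longrightarrow> 0 \<le> f' x"
    and "0 \<le> t"
  shows "0 \<le> f t"
  using DERIV_nonneg_imp_nondecreasing[of 0 t f] assms by fastforce

lemma exp_le_trapezoid:
  fixes t :: real
  assumes "0 \<le> t"
  shows "exp t - 1 \<le> t * (1 + exp t) / 2"
proof -
  have deriv_nonneg: "0 \<le> exp x * (x - 1) + 1" if "0 \<le> x" for x :: real
    by (rule nonneg_if_DERIV_nonneg[OF _ _ _ that, where f' = "\<lambda>x. x * exp x"])
      (auto intro!: derivative_eq_intros simp: algebra_simps)
  have "0 \<le> exp t * (t - 2) + t + 2"
    by (rule nonneg_if_DERIV_nonneg[OF _ _ _ assms, where f' = "\<lambda>x. exp x * (x - 1) + 1"])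
      (auto intro!: derivative_eq_intros dest: deriv_nonneg simp: algebra_simps)
  then show ?thesis
    by (simp add: field_simps)
qed

lemma trapezoid_minus_exp_le:
  fixes t :: real
  assumes "0 \<le> t"
  shows "t * (1 + exp t) / 2 - (exp t - 1) \<le> t\<^sup>2 * (1 + exp t) / 8"
proof -
  have deriv_nonneg: "0 \<le> exp x * (x\<^sup>2 - 2 * x + 4) - 4 + 2 * x" if "0 \<le> x" for x :: real
    by (rule nonneg_if_DERIV_nonneg[OF _ _ _ that, where f' = "\<lambda>x. exp x * (x\<^sup>2 + 2) + 2"])
      (auto intro!: derivative_eq_intros simp: algebra_simps power2_eq_square)
  have "0 \<le> exp t * (t\<^sup>2 - 4 * t + 8) - (8 + 4 * t - t\<^sup>2)"
    by (rule nonneg_if_DERIV_nonneg[OF _ _ _ assms,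
          where f' = "\<lambda>x. exp x * (x\<^sup>2 - 2 * x + 4) - 4 + 2 * x"])
      (auto intro!: derivative_eq_intros dest: deriv_nonneg simp: algebra_simps power2_eq_square)
  then show ?thesis
    by (simp add: field_simps power2_eq_square)
qed

lemma amean_minus_lmean_exp:
  fixes a t :: real
  assumes "0 < a" and "0 < t"
  shows "amean a (a * exp t) - lmean a (a * exp t) = a / t * (t * (1 + exp t) / 2 - (exp t - 1))"
  using assms by (simp add: amean_def lmean_def ln_mult field_simps)

lemma lmean_le_amean:
  fixes a b :: real
  assumes "0 < a" and "a < b"
  shows "lmean a b \<le> amean a b"
proof -
  define t where "t = ln b - ln a"
  have "0 < t" and b: "b = a * exp t"
    using assms by (simp_all add: t_def exp_diff)
  have "0 \<le> a / t * (t * (1 + exp t) / 2 - (exp t - 1))"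
    using exp_le_trapezoid[of t] \<open>0 < t\<close> \<open>0 < a\<close> by simp
  then show ?thesis
    using amean_minus_lmean_exp[OF \<open>0 < a\<close> \<open>0 < t\<close>] b by simp
qed

lemma amean_minus_lmean_le:
  fixes a b :: real
  assumes "0 < a" and "a < b"
  shows "amean a b - lmean a b \<le> (ln b - ln a) / 4 * amean a b"
proof -
  define t where "t = ln b - ln a"
  have "0 < t" and b: "b = a * exp t"
    using assms by (simp_all add: t_def exp_diff)
  have "amean a b - lmean a b = a / t * (t * (1 + exp t) / 2 - (exp t - 1))"
    using amean_minus_lmean_exp[OF \<open>0 < a\<close> \<open>0 < t\<close>] b by simp
  also have "\<dots> \<le> a / t * (t\<^sup>2 * (1 + exp t) / 8)"
    using trapezoid_minus_exp_le[of t] \<open>0 < t\<close> \<open>0 < a\<close> by (intro mult_left_mono) auto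
  also have "\<dots> = t / 4 * amean a b"
    using \<open>0 < t\<close> by (simp add: b amean_def field_simps power2_eq_square)
  finally show ?thesis
    by (simp add: t_def)
qed

lemma plus_one_le_two_powr:
  fixes p :: real
  assumes "1 \<le> p"
  shows "p + 1 \<le> 2 powr p"
proof -
  have "2 powr 1 - 1 - 1 \<le> 2 powr p - p - 1"
  proof (rule DERIV_nonneg_imp_nondecreasing[OF assms])
    fix x :: real
    assume "1 \<le> x"
    then have "2 \<le> 2 powr x"
      using powr_mono[of 1 x "2::real"] by simp
    from mult_mono[OF ln2_ge_two_thirds this] have "1 \<le> ln 2 * 2 powr x"
      by simp
    then show "\<exists>y. ((\<lambda>x. 2 powr x - x - 1) has_real_derivative y) (at x) \<and> 0 \<le> y"
      by (intro exI[of _ "ln 2 * 2 powr x - 1"]) (auto intro!: derivative_eq_intros)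
  qed
  then show ?thesis
    by simp
qed

lemma plus_one_powr_inverse_le_two:
  fixes p :: real
  assumes "1 \<le> p"
  shows "(p + 1) powr (1 / p) \<le> 2"
proof -
  have "(p + 1) powr (1 / p) \<le> (2 powr p) powr (1 / p)"
    using plus_one_le_two_powr[OF assms] assms by (intro powr_mono2) auto
  also have "\<dots> = 2"
    using assms by (simp add: powr_powr)
  finally show ?thesis .
qed

lemma amean_le_power_mean:
  fixes a b q :: real
  assumes "1 \<le> q" and "0 < a" and "0 < b"
  shows "amean a b \<le> amean (a powr q) (b powr q) powr (1 / q)"
proof -
  have "amean a b powr q \<le> amean (a powr q) (b powr q)"
    using convex_onD[OF powr_convex[OF assms(1)], of "1/2" a b] assms
    by (simp add: amean_def field_simps)
  then have "(amean a b powr q) powr (1 / q) \<le> amean (a powr q) (b powr q) powr (1 / q)"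
    using assms by (intro powr_mono2) (auto simp: amean_def)
  then show ?thesis
    using assms by (simp add: amean_def powr_powr)
qed

theorem proposition1:
  fixes p q a b :: real
  assumes "p > 1" and "q = p / (p - 1)" and "0 < a" and "a < b"
  shows "\<bar>amean a b - lmean a b\<bar> \<le>
    (ln b - ln a) / (2 * (p + 1) powr (1 / p)) * (amean (\<bar>a\<bar> powr q) (\<bar>b\<bar> powr q)) powr (1 / q)"
proof -
  have "1 \<le> q"
    using assms by (simp add: le_divide_eq)
  have "0 < ln b - ln a" and "0 < amean a b"
    using assms by (simp_all add: amean_def)
  have "\<bar>amean a b - lmean a b\<bar> \<le> (ln b - ln a) / (2 * 2) * amean a b"
    using lmean_le_amean[OF \<open>0 < a\<close> \<open>a < b\<close>] amean_minus_lmean_le[OF \<open>0 < a\<close> \<open>a < b\<close>] by simp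
  also have "\<dots> \<le> (ln b - ln a) / (2 * (p + 1) powr (1 / p)) * amean a b"
    using plus_one_powr_inverse_le_two[of p] assms \<open>0 < ln b - ln a\<close> \<open>0 < amean a b\<close>
    by (intro mult_right_mono divide_left_mono mult_left_mono mult_pos_pos) auto
  also have "\<dots> \<le> (ln b - ln a) / (2 * (p + 1) powr (1 / p)) * amean (\<bar>a\<bar> powr q) (\<bar>b\<bar> powr q) powr (1 / q)"
    using amean_le_power_mean[OF \<open>1 \<le> q\<close>, of a b] assms \<open>0 < ln b - ln a\<close>
    by (intro mult_left_mono) auto
  finally show ?thesis .
qed

end
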